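(* Let $P$ be a propositional variable and $T$ a closed term with $\vdash T:\perp\to P$. Then for every term $t$ and every $\bar u\in\mathcal{E}^{<\omega}$, $((T\ t)\ \bar u)\triangleright^*\underline{\mu}.t$, i.e. $((T\ t)\ \bar u)$ reduces to some element of $M_t$.
   Context: Formulas are built from propositional variables and $\perp$ using $\to,\wedge,\vee$. Terms $\mathcal{T}$ and $\mathcal{E}$-terms: with disjoint sets $\mathcal{X}$ ($\lambda$-variables) and $\mathcal{A}$ ($\mu$-variables), $\mathcal{T} ::= x \mid \lambda x.\mathcal{T} \mid (\mathcal{T}\ \mathcal{E}) \mid \langle \mathcal{T},\mathcal{T}\rangle \mid \omega_1\mathcal{T} \mid \omega_2\mathcal{T} \mid \mu a.\mathcal{T} \mid (a\ \mathcal{T})$ and $\mathcal{E} ::= \mathcal{T} \mid \pi_1 \mid \pi_2 \mid [x.\mathcal{T}, y.\mathcal{T}]$. Typing judgements $\Gamma\vdash t:A;\Delta$ are generated by: $\Gamma,x:A\vdash x:A;\Delta$; from $\Gamma,x:A\vdash t:B;\Delta$ infer $\Gamma\vdash\lambda x.t:A\to B;\Delta$; from $\Gamma\vdash u:A\to B;\Delta$ and $\Gamma\vdash v:A;\Delta$ infer $\Gamma\vdash(u\ v):B;\Delta$; from $\Gamma\vdash u:A;\Delta$, $\Gamma\vdash v:B;\Delta$ infer $\Gamma\vdash\langle u,v\rangle:A\wedge B;\Delta$; from $\Gamma\vdash t:A\wedge B;\Delta$ infer $\Gamma\vdash(t\ \pi_1):A;\Delta$ and $\Gamma\vdash(t\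 \pi_2):B;\Delta$; from $\Gamma\vdash t:A;\Delta$ infer $\Gamma\vdash\omega_1t:A\vee B;\Delta$; from $\Gamma\vdash t:B;\Delta$ infer $\Gamma\vdash\omega_2t:A\vee B;\Delta$; from $\Gamma\vdash t:A\vee B;\Delta$, $\Gamma,x:A\vdash u:C;\Delta$, $\Gamma,y:B\vdash v:C;\Delta$ infer $\Gamma\vdash(t\ [x.u,y.v]):C;\Delta$; from $\Gamma\vdash t:A;\Delta,a:A$ infer $\Gamma\vdash(a\ t):\perp;\Delta,a:A$; from $\Gamma\vdash t:\perp;\Delta,a:A$ infer $\Gamma\vdash\mu a.t:A;\Delta$. A closed term of type $A$ is one with $\vdash T:A$ (empty contexts). Reduction $\triangleright$ is the compatible closure of: $(\lambda x.u\ v)\triangleright u[x:=v]$; $(\langle t_1,t_2\rangle\ \pi_i)\triangleright t_i$; $(\omega_i t\ [x_1.u_1,x_2.u_2])\triangleright u_i[x_i:=t]$; $((t\ [x_1.u_1,x_2.u_2])\ \varepsilon)\triangleright(t\ [x_1.(u_1\ \varepsilon),x_2.(u_2\ \varepsilon)])$; $(\mu a.t\ \varepsilon)\triangleright\mu a.t[a:=^*\varepsilon]$ ($t[a:=^*\varepsilon]$ replaces inductively each subterm $(a\ v)$ by $(a\ (v\ \varepsilon))$); $\triangleright^*$ is its reflexive-transitive closure. $\mathcal{E}^{<\omega}$ is the set of finite sequences of $\mathcal{E}$-terms; for $\bar w=w_1\dots w_n$, $(t\ \bar w)$ is $t$ if $n=0$ and $((t\ w_1)\ w_2\dots w_n)$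 otherwise. For a term $t$, $M_t$ is the smallest set containing $t$ such that if $u\in M_t$ and $a\in\mathcal{A}$ then $\mu a.u\in M_t$ and $(a\ u)\in M_t$; $\underline{\mu}.t$ denotes an (unspecified) element of $M_t$, and "$s\triangleright^*\underline{\mu}.t$" means $s\triangleright^* w$ for some $w\in M_t$. *)

theory Defs
  imports Main
begin

datatype form = PVar nat | Bot | Imp form form | Conj form form | Disj form form

text \<open>Lambda-variables and mu-variables are
  two separate index spaces (hence disjoint).
  Lam t = \<lambda>x.t (index 0 of t is x); Case u v = [x.u, y.v] (index 0 in u is x, in v is y);
  Mu t = \<mu>a.t (mu-index 0 of t is a); MApp a t = (a t).\<close>
datatype trm =
    Var nat
  | Lam trm
  | App trm etrm
  | Pair trm trm
  | Inl trm
  | Inr trm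
  | Mu trm
  | MApp nat trm
and etrm =
    ET trm
  | Pi1
  | Pi2
  | Case trm trm

fun liftL :: "nat \<Rightarrow> trm \<Rightarrow> trm" and liftLe :: "nat \<Rightarrow> etrm \<Rightarrow> etrm" where
  "liftL k (Var i) = (if i < k then Var i else Var (Suc i))"
| "liftL k (Lam t) = Lam (liftL (Suc k) t)"
| "liftL k (App t e) = App (liftL k t) (liftLe k e)"
| "liftL k (Pair t s) = Pair (liftL k t) (liftL k s)"
| "liftL k (Inl t) = Inl (liftL k t)"
| "liftL k (Inr t) = Inr (liftL k t)"
| "liftL k (Mu t) = Mu (liftL k t)"
| "liftL k (MApp a t) = MApp a (liftL k t)"
| "liftLe k (ET t) = ET (liftL k t)"
| "liftLe k Pi1 = Pi1"
| "liftLe k Pi2 = Pi2"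
| "liftLe k (Case u v) = Case (liftL (Suc k) u) (liftL (Suc k) v)"

fun liftM :: "nat \<Rightarrow> trm \<Rightarrow> trm" and liftMe :: "nat \<Rightarrow> etrm \<Rightarrow> etrm" where
  "liftM k (Var i) = Var i"
| "liftM k (Lam t) = Lam (liftM k t)"
| "liftM k (App t e) = App (liftM k t) (liftMe k e)"
| "liftM k (Pair t s) = Pair (liftM k t) (liftM k s)"
| "liftM k (Inl t) = Inl (liftM k t)"
| "liftM k (Inr t) = Inr (liftM k t)"
| "liftM k (Mu t) = Mu (liftM (Suc k) t)"
| "liftM k (MApp a t) = MApp (if a < k then a else Suc a) (liftM k t)"
| "liftMe k (ET t) = ET (liftM k t)"
| "liftMe k Pi1 = Pi1"
| "liftMe k Pi2 = Pi2"
| "liftMe k (Case u v) = Case (liftM k u) (liftM k v)"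

fun substL :: "trm \<Rightarrow> nat \<Rightarrow> trm \<Rightarrow> trm" and substLe :: "etrm \<Rightarrow> nat \<Rightarrow> trm \<Rightarrow> etrm" where
  "substL (Var i) k s = (if i < k then Var i else if i = k then s else Var (i - 1))"
| "substL (Lam t) k s = Lam (substL t (Suc k) (liftL 0 s))"
| "substL (App t e) k s = App (substL t k s) (substLe e k s)"
| "substL (Pair t u) k s = Pair (substL t k s) (substL u k s)"
| "substL (Inl t) k s = Inl (substL t k s)"
| "substL (Inr t) k s = Inr (substL t k s)"
| "substL (Mu t) k s = Mu (substL t k (liftM 0 s))"
| "substL (MApp a t) k s = MApp a (substL t k s)"
| "substLe (ET t) k s = ET (substL t k s)"
| "substLe Pi1 k s = Pi1"
| "substLe Pi2 k s = Pi2"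
| "substLe (Case u v) k s = Case (substL u (Suc k) (liftL 0 s)) (substL v (Suc k) (liftL 0 s))"

fun substM :: "trm \<Rightarrow> nat \<Rightarrow> etrm \<Rightarrow> trm" and substMe :: "etrm \<Rightarrow> nat \<Rightarrow> etrm \<Rightarrow> etrm" where
  "substM (Var i) a e = Var i"
| "substM (Lam t) a e = Lam (substM t a (liftLe 0 e))"
| "substM (App t f) a e = App (substM t a e) (substMe f a e)"
| "substM (Pair t u) a e = Pair (substM t a e) (substM u a e)"
| "substM (Inl t) a e = Inl (substM t a e)"
| "substM (Inr t) a e = Inr (substM t a e)"
| "substM (Mu t) a e = Mu (substM t (Suc a) (liftMe 0 e))"
| "substM (MApp b t) a e =
     (if b = a then MApp b (App (substM t a e) e) else MApp b (substM t a e))"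
| "substMe (ET t) a e = ET (substM t a e)"
| "substMe Pi1 a e = Pi1"
| "substMe Pi2 a e = Pi2"
| "substMe (Case u v) a e = Case (substM u a (liftLe 0 e)) (substM v a (liftLe 0 e))"

definition ext :: "'a \<Rightarrow> (nat \<Rightarrow> 'a option) \<Rightarrow> nat \<Rightarrow> 'a option" where
  "ext A G = (\<lambda>i. case i of 0 \<Rightarrow> Some A | Suc j \<Rightarrow> G j)"

inductive typing :: "(nat \<Rightarrow> form option) \<Rightarrow> trm \<Rightarrow> form \<Rightarrow> (nat \<Rightarrow> form option) \<Rightarrow> bool" where
  ty_var: "G x = Some A \<Longrightarrow> typing G (Var x) A D"
| ty_lam: "typing (ext A G) t B D \<Longrightarrow> typing G (Lam t) (Imp A B) D"
| ty_app: "typing G u (Imp A B) D \<Longrightarrow> typing G v A D \<Longrightarrow> typing G (App u (ET v)) B D"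
| ty_pair: "typing G u A D \<Longrightarrow> typing G v B D \<Longrightarrow> typing G (Pair u v) (Conj A B) D"
| ty_pi1: "typing G t (Conj A B) D \<Longrightarrow> typing G (App t Pi1) A D"
| ty_pi2: "typing G t (Conj A B) D \<Longrightarrow> typing G (App t Pi2) B D"
| ty_inl: "typing G t A D \<Longrightarrow> typing G (Inl t) (Disj A B) D"
| ty_inr: "typing G t B D \<Longrightarrow> typing G (Inr t) (Disj A B) D"
| ty_case: "typing G t (Disj A B) D \<Longrightarrow> typing (ext A G) u C D \<Longrightarrow> typing (ext B G) v C D
             \<Longrightarrow> typing G (App t (Case u v)) C D"
| ty_mapp: "D a = Some A \<Longrightarrow> typing G t A D \<Longrightarrow> typing G (MApp a t) Bot D"
| ty_mu: "typing G t Bot (ext A D) \<Longrightarrow> typing G (Mu t) A D"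

inductive red :: "trm \<Rightarrow> trm \<Rightarrow> bool" and rede :: "etrm \<Rightarrow> etrm \<Rightarrow> bool" where
  r_beta: "red (App (Lam u) (ET v)) (substL u 0 v)"
| r_pi1: "red (App (Pair t1 t2) Pi1) t1"
| r_pi2: "red (App (Pair t1 t2) Pi2) t2"
| r_inl: "red (App (Inl t) (Case u1 u2)) (substL u1 0 t)"
| r_inr: "red (App (Inr t) (Case u1 u2)) (substL u2 0 t)"
| r_comm: "red (App (App t (Case u1 u2)) e)
              (App t (Case (App u1 (liftLe 0 e)) (App u2 (liftLe 0 e))))"
| r_mu: "red (App (Mu t) e) (Mu (substM t 0 (liftMe 0 e)))"
| c_lam: "red t t' \<Longrightarrow> red (Lam t) (Lam t')"
| c_app1: "red t t' \<Longrightarrow> red (App t e) (App t' e)"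
| c_app2: "rede e e' \<Longrightarrow> red (App t e) (App t e')"
| c_pair1: "red t t' \<Longrightarrow> red (Pair t s) (Pair t' s)"
| c_pair2: "red s s' \<Longrightarrow> red (Pair t s) (Pair t s')"
| c_inl: "red t t' \<Longrightarrow> red (Inl t) (Inl t')"
| c_inr: "red t t' \<Longrightarrow> red (Inr t) (Inr t')"
| c_mu: "red t t' \<Longrightarrow> red (Mu t) (Mu t')"
| c_mapp: "red t t' \<Longrightarrow> red (MApp a t) (MApp a t')"
| c_et: "red t t' \<Longrightarrow> rede (ET t) (ET t')"
| c_case1: "red u u' \<Longrightarrow> rede (Case u v) (Case u' v)"
| c_case2: "red v v' \<Longrightarrow> rede (Case u v) (Case u v')"

abbreviation reds :: "trm \<Rightarrow> trm \<Rightarrow> bool" where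
  "reds \<equiv> red\<^sup>*\<^sup>*"

definition apps :: "trm \<Rightarrow> etrm list \<Rightarrow> trm" where
  "apps t ws = foldl App t ws"

text \<open>In de Bruijn form, \<mu>a.u with a bound variable fresh for t is Mu u where the
  occurrence of t inside u has its free mu-indices shifted by one.\<close>
inductive inM :: "trm \<Rightarrow> trm \<Rightarrow> bool" where
  M_base: "inM t t"
| M_app: "inM t u \<Longrightarrow> inM t (MApp a u)"
| M_mu: "inM (liftM 0 t) u \<Longrightarrow> inM t (Mu u)"

end

theory Submission
  imports Defs
begin

(* The proof is a realizability argument in the style of Krivine, with the "pole" fixed to be
   the set of terms reducing into M_t.  For a fixed target term t, every formula A is
   interpreted by a set Stk A t of stacks (lists of E-terms): Bot admits only the empty stack,
   propositional variables admit every stack, and A \<rightarrow> B, A \<and> B, A \<or> B admit stacks that start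
   with a realizer of A, a projection, or a case analysis, respectively.  A term realizes A if,
   applied to any stack of A, it lands in the pole.  Since M_t extends under \<mu>-binders, where
   t is shifted, realizability is required uniformly for all shifts of t.

   The adequacy lemma (every typable term,
   instantiated by realizers and stacks, lies in the pole) is proved rule by rule.  For the
   closed term T of type Bot \<rightarrow> P, the term t realizes Bot (it lies in its own M_t), hence
   (T t) u_1 ... u_n lies in the pole for every stack u_1 ... u_n. *)


section \<open>Commutation of liftings and substitutions\<close>

lemma liftL_liftL:
  shows "i \<le> j \<Longrightarrow> liftL i (liftL j u) = liftL (Suc j) (liftL i u)"
    and "i \<le> j \<Longrightarrow> liftLe i (liftLe j e) = liftLe (Suc j) (liftLe i e)"
  by (induct u and e arbitrary: i j and i j rule: trm.induct etrm.induct) auto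

lemma liftM_liftL:
  shows "liftM k (liftL j u) = liftL j (liftM k u)"
    and "liftMe k (liftLe j e) = liftLe j (liftMe k e)"
  by (induct u and e arbitrary: j k and j k rule: trm.induct etrm.induct) auto

lemma liftM_liftM:
  shows "i \<le> k \<Longrightarrow> liftM (Suc k) (liftM i u) = liftM i (liftM k u)"
    and "i \<le> k \<Longrightarrow> liftMe (Suc k) (liftMe i e) = liftMe i (liftMe k e)"
  by (induct u and e arbitrary: i k and i k rule: trm.induct etrm.induct) auto

lemma substL_liftL_Suc:
  shows "j \<le> k \<Longrightarrow> substL (liftL j u) (Suc k) (liftL j a) = liftL j (substL u k a)"
    and "j \<le> k \<Longrightarrow> substLe (liftLe j e) (Suc k) (liftL j a) = liftLe j (substLe e k a)"
  by (induct u and e arbitrary: j k a and j k a rule: trm.induct etrm.induct)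
     (auto simp: liftL_liftL liftM_liftL)

lemma substL_liftM:
  shows "substL (liftM j u) k (liftM j a) = liftM j (substL u k a)"
    and "substLe (liftMe j e) k (liftM j a) = liftMe j (substLe e k a)"
  by (induct u and e arbitrary: j k a and j k a rule: trm.induct etrm.induct)
     (auto simp: liftM_liftL(1)[symmetric] liftM_liftM(1)[of 0, simplified, symmetric])

lemma substL_liftL:
  shows "substL (liftL k u) k a = u"
    and "substLe (liftLe k e) k a = e"
  by (induct u and e arbitrary: k a and k a rule: trm.induct etrm.induct) auto


fun freshM :: "nat \<Rightarrow> trm \<Rightarrow> bool" and freshMe :: "nat \<Rightarrow> etrm \<Rightarrow> bool" where
  "freshM k (Var i) = True"
| "freshM k (Lam t) = freshM k t"
| "freshM k (App t e) = (freshM k t \<and> freshMe k e)"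
| "freshM k (trm.Pair t s) = (freshM k t \<and> freshM k s)"
| "freshM k (trm.Inl t) = freshM k t"
| "freshM k (trm.Inr t) = freshM k t"
| "freshM k (Mu t) = freshM (Suc k) t"
| "freshM k (MApp b t) = (b \<noteq> k \<and> freshM k t)"
| "freshMe k (ET t) = freshM k t"
| "freshMe k Pi1 = True"
| "freshMe k Pi2 = True"
| "freshMe k (Case u v) = (freshM k u \<and> freshM k v)"

lemma freshM_liftM_same:
  shows "freshM k (liftM k u)" and "freshMe k (liftMe k e)"
  by (induct u and e arbitrary: k and k rule: trm.induct etrm.induct) auto

lemma freshM_liftM:
  shows "freshM k u \<Longrightarrow> j \<le> k \<Longrightarrow> freshM (Suc k) (liftM j u)"
    and "freshMe k e \<Longrightarrow> j \<le> k \<Longrightarrow> freshMe (Suc k) (liftMe j e)"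
  by (induct u and e arbitrary: j k and j k rule: trm.induct etrm.induct) auto

lemma freshM_liftL:
  shows "freshM k u \<Longrightarrow> freshM k (liftL j u)"
    and "freshMe k e \<Longrightarrow> freshMe k (liftLe j e)"
  by (induct u and e arbitrary: j k and j k rule: trm.induct etrm.induct) auto

lemma substM_fresh:
  shows "freshM k u \<Longrightarrow> substM u k f = u"
    and "freshMe k e \<Longrightarrow> substMe e k f = e"
  by (induct u and e arbitrary: k f and k f rule: trm.induct etrm.induct) auto


lemma apps_Nil [simp]: "apps x [] = x"
  by (simp add: apps_def)

lemma apps_Cons [simp]: "apps x (e # p) = apps (App x e) p"
  by (simp add: apps_def)

lemma apps_snoc: "apps x (p @ [e]) = App (apps x p) e"
  by (simp add: apps_def)

lemma liftM_apps: "liftM k (apps x p) = apps (liftM k x) (map (liftMe k) p)"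
  by (induct p arbitrary: x) auto

lemma substL_apps: "substL (apps x p) k a = apps (substL x k a) (map (\<lambda>f. substLe f k a) p)"
  by (induct p arbitrary: x) auto

lemma substM_apps: "substM (apps x p) k e = apps (substM x k e) (map (\<lambda>f. substMe f k e) p)"
  by (induct p arbitrary: x) auto

lemma red_apps: "red x y \<Longrightarrow> red (apps x p) (apps y p)"
  by (induct p arbitrary: x y) (auto intro: c_app1)

lemma reds_MApp: "reds x y \<Longrightarrow> reds (MApp a x) (MApp a y)"
  by (induct rule: rtranclp_induct) (auto intro: rtranclp.rtrancl_into_rtrancl c_mapp)

lemma reds_Mu: "reds x y \<Longrightarrow> reds (Mu x) (Mu y)"
  by (induct rule: rtranclp_induct) (auto intro: rtranclp.rtrancl_into_rtrancl c_mu)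


section \<open>Simultaneous substitution\<close>

definition upL :: "(nat \<Rightarrow> trm) \<Rightarrow> nat \<Rightarrow> trm" where
  "upL \<sigma> = (\<lambda>i. case i of 0 \<Rightarrow> Var 0 | Suc j \<Rightarrow> liftL 0 (\<sigma> j))"

definition upLs :: "(nat \<Rightarrow> etrm list) \<Rightarrow> nat \<Rightarrow> etrm list" where
  "upLs \<rho> = (\<lambda>b. map (liftLe 0) (\<rho> b))"

definition upM :: "(nat \<Rightarrow> trm) \<Rightarrow> nat \<Rightarrow> trm" where
  "upM \<sigma> = (\<lambda>i. liftM 0 (\<sigma> i))"

definition upMs :: "(nat \<Rightarrow> etrm list) \<Rightarrow> nat \<Rightarrow> etrm list" where
  "upMs \<rho> = (\<lambda>b. case b of 0 \<Rightarrow> [] | Suc c \<Rightarrow> map (liftMe 0) (\<rho> c))"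

definition upMr :: "(nat \<Rightarrow> nat) \<Rightarrow> nat \<Rightarrow> nat" where
  "upMr r = (\<lambda>b. case b of 0 \<Rightarrow> 0 | Suc c \<Rightarrow> Suc (r c))"

definition cons0 :: "trm \<Rightarrow> (nat \<Rightarrow> trm) \<Rightarrow> nat \<Rightarrow> trm" where
  "cons0 a \<sigma> = (\<lambda>i. case i of 0 \<Rightarrow> a | Suc j \<Rightarrow> \<sigma> j)"

fun Phi :: "(nat \<Rightarrow> trm) \<Rightarrow> (nat \<Rightarrow> etrm list) \<Rightarrow> (nat \<Rightarrow> nat) \<Rightarrow> trm \<Rightarrow> trm"
and Phie :: "(nat \<Rightarrow> trm) \<Rightarrow> (nat \<Rightarrow> etrm list) \<Rightarrow> (nat \<Rightarrow> nat) \<Rightarrow> etrm \<Rightarrow> etrm" where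
  "Phi \<sigma> \<rho> r (Var x) = \<sigma> x"
| "Phi \<sigma> \<rho> r (Lam s) = Lam (Phi (upL \<sigma>) (upLs \<rho>) r s)"
| "Phi \<sigma> \<rho> r (App s e) = App (Phi \<sigma> \<rho> r s) (Phie \<sigma> \<rho> r e)"
| "Phi \<sigma> \<rho> r (trm.Pair s1 s2) = trm.Pair (Phi \<sigma> \<rho> r s1) (Phi \<sigma> \<rho> r s2)"
| "Phi \<sigma> \<rho> r (trm.Inl s) = trm.Inl (Phi \<sigma> \<rho> r s)"
| "Phi \<sigma> \<rho> r (trm.Inr s) = trm.Inr (Phi \<sigma> \<rho> r s)"
| "Phi \<sigma> \<rho> r (Mu s) = Mu (Phi (upM \<sigma>) (upMs \<rho>) (upMr r) s)"
| "Phi \<sigma> \<rho> r (MApp b s) = MApp (r b) (apps (Phi \<sigma> \<rho> r s) (\<rho> b))"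
| "Phie \<sigma> \<rho> r (ET s) = ET (Phi \<sigma> \<rho> r s)"
| "Phie \<sigma> \<rho> r Pi1 = Pi1"
| "Phie \<sigma> \<rho> r Pi2 = Pi2"
| "Phie \<sigma> \<rho> r (Case u v) = Case (Phi (upL \<sigma>) (upLs \<rho>) r u) (Phi (upL \<sigma>) (upLs \<rho>) r v)"

text \<open>The identity instance, which is how the adequacy lemma is applied to T itself.\<close>
lemma Phi_id:
  shows "Phi Var (\<lambda>_. []) id s = s" and "Phie Var (\<lambda>_. []) id e = e"
proof -
  have up: "upL Var = Var" "upLs (\<lambda>_. []) = (\<lambda>_. [])" "upM Var = Var"
    "upMs (\<lambda>_. []) = (\<lambda>_. [])" "upMr (\<lambda>b. b) = (\<lambda>b. b)"
    by (auto simp: upL_def upLs_def upM_def upMs_def upMr_def fun_eq_iff split: nat.split)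
  show "Phi Var (\<lambda>_. []) id s = s" and "Phie Var (\<lambda>_. []) id e = e"
    by (induct s and e rule: trm.induct etrm.induct) (auto simp: up)
qed

lemma up_substL:
  "(\<lambda>x. substL (upL \<sigma> x) (Suc k) (liftL 0 a)) = upL (\<lambda>x. substL (\<sigma> x) k a)"
  "(\<lambda>b. map (\<lambda>f. substLe f (Suc k) (liftL 0 a)) (upLs \<rho> b))
     = upLs (\<lambda>b. map (\<lambda>f. substLe f k a) (\<rho> b))"
  "(\<lambda>x. substL (upM \<sigma> x) k (liftM 0 a)) = upM (\<lambda>x. substL (\<sigma> x) k a)"
  "(\<lambda>b. map (\<lambda>f. substLe f k (liftM 0 a)) (upMs \<rho> b))
     = upMs (\<lambda>b. map (\<lambda>f. substLe f k a) (\<rho> b))"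
  by (auto simp: upL_def upLs_def upM_def upMs_def fun_eq_iff substL_liftL_Suc substL_liftM
      split: nat.split)

lemma up_liftM:
  "(\<lambda>x. liftM k (upL \<sigma> x)) = upL (\<lambda>x. liftM k (\<sigma> x))"
  "(\<lambda>b. map (liftMe k) (upLs \<rho> b)) = upLs (\<lambda>b. map (liftMe k) (\<rho> b))"
  "(\<lambda>x. liftM (Suc k) (upM \<sigma> x)) = upM (\<lambda>x. liftM k (\<sigma> x))"
  "(\<lambda>b. map (liftMe (Suc k)) (upMs \<rho> b)) = upMs (\<lambda>b. map (liftMe k) (\<rho> b))"
  "(\<lambda>b. if upMr r b < Suc k then upMr r b else Suc (upMr r b))
     = upMr (\<lambda>b. if r b < k then r b else Suc (r b))"
  by (auto simp: upL_def upLs_def upM_def upMs_def upMr_def fun_eq_iff liftM_liftL liftM_liftM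
      split: nat.split)

lemma Phi_substL:
  shows "substL (Phi \<sigma> \<rho> r s) k a
     = Phi (\<lambda>x. substL (\<sigma> x) k a) (\<lambda>b. map (\<lambda>f. substLe f k a) (\<rho> b)) r s"
    and "substLe (Phie \<sigma> \<rho> r e) k a
     = Phie (\<lambda>x. substL (\<sigma> x) k a) (\<lambda>b. map (\<lambda>f. substLe f k a) (\<rho> b)) r e"
  by (induct s and e arbitrary: \<sigma> \<rho> r k a and \<sigma> \<rho> r k a rule: trm.induct etrm.induct)
     (simp_all add: substL_apps up_substL)

lemma Phi_liftM:
  shows "liftM k (Phi \<sigma> \<rho> r s)
     = Phi (\<lambda>x. liftM k (\<sigma> x)) (\<lambda>b. map (liftMe k) (\<rho> b)) (\<lambda>b. if r b < k then r b else Suc (r b)) s"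
    and "liftMe k (Phie \<sigma> \<rho> r e)
     = Phie (\<lambda>x. liftM k (\<sigma> x)) (\<lambda>b. map (liftMe k) (\<rho> b)) (\<lambda>b. if r b < k then r b else Suc (r b)) e"
  by (induct s and e arbitrary: \<sigma> \<rho> r k and \<sigma> \<rho> r k rule: trm.induct etrm.induct)
     (simp_all add: liftM_apps up_liftM)

lemma substL_Phi_upL: "substL (Phi (upL \<sigma>) (upLs \<rho>) r s) 0 a = Phi (cons0 a \<sigma>) \<rho> r s"
proof -
  have "(\<lambda>x. substL (upL \<sigma> x) 0 a) = cons0 a \<sigma>"
    by (auto simp: upL_def cons0_def fun_eq_iff substL_liftL split: nat.split)
  moreover have "(\<lambda>b. map (\<lambda>f. substLe f 0 a) (upLs \<rho> b)) = \<rho>"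
    by (auto simp: upLs_def fun_eq_iff substL_liftL o_def)
  ultimately show ?thesis by (simp add: Phi_substL)
qed

lemma Phi_substM:
  shows "(\<forall>x. freshM k (\<sigma> x)) \<Longrightarrow> (\<forall>b. \<forall>g\<in>set (\<rho> b). freshMe k g) \<Longrightarrow> freshMe k f \<Longrightarrow>
     substM (Phi \<sigma> \<rho> r s) k f = Phi \<sigma> (\<lambda>b. if r b = k then \<rho> b @ [f] else \<rho> b) r s"
    and "(\<forall>x. freshM k (\<sigma> x)) \<Longrightarrow> (\<forall>b. \<forall>g\<in>set (\<rho> b). freshMe k g) \<Longrightarrow> freshMe k f \<Longrightarrow>
     substMe (Phie \<sigma> \<rho> r e) k f = Phie \<sigma> (\<lambda>b. if r b = k then \<rho> b @ [f] else \<rho> b) r e"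
proof (induct s and e arbitrary: \<sigma> \<rho> r k f and \<sigma> \<rho> r k f rule: trm.induct etrm.induct)
  case (Var x)
  then show ?case by (simp add: substM_fresh)
next
  case (Lam s)
  have "\<forall>x. freshM k (upL \<sigma> x)" "\<forall>b. \<forall>g\<in>set (upLs \<rho> b). freshMe k g"
    using Lam.prems by (auto simp: upL_def upLs_def freshM_liftL split: nat.split)
  moreover have "(\<lambda>b. if r b = k then upLs \<rho> b @ [liftLe 0 f] else upLs \<rho> b)
      = upLs (\<lambda>b. if r b = k then \<rho> b @ [f] else \<rho> b)"
    by (auto simp: upLs_def fun_eq_iff)
  ultimately show ?case using Lam.hyps freshM_liftL(2)[OF Lam.prems(3)] by simp
next
  case (Mu s)
  have "\<forall>x. freshM (Suc k) (upM \<sigma> x)" "\<forall>b. \<forall>g\<in>set (upMs \<rho> b). freshMe (Suc k) g"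
    using Mu.prems by (auto simp: upM_def upMs_def freshM_liftM split: nat.split)
  moreover have "(\<lambda>b. if upMr r b = Suc k then upMs \<rho> b @ [liftMe 0 f] else upMs \<rho> b)
      = upMs (\<lambda>b. if r b = k then \<rho> b @ [f] else \<rho> b)"
    by (auto simp: upMs_def upMr_def fun_eq_iff split: nat.split)
  ultimately show ?case using Mu.hyps freshM_liftM(2)[OF Mu.prems(3)] by simp
next
  case (MApp b s)
  have "map (\<lambda>g. substMe g k f) (\<rho> b) = \<rho> b"
    using MApp.prems(2) by (auto intro!: map_idI substM_fresh(2))
  with MApp show ?case by (simp add: substM_apps apps_snoc)
next
  case (Case u v)
  have "\<forall>x. freshM k (upL \<sigma> x)" "\<forall>b. \<forall>g\<in>set (upLs \<rho> b). freshMe k g"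
    using Case.prems by (auto simp: upL_def upLs_def freshM_liftL split: nat.split)
  moreover have "(\<lambda>b. if r b = k then upLs \<rho> b @ [liftLe 0 f] else upLs \<rho> b)
      = upLs (\<lambda>b. if r b = k then \<rho> b @ [f] else \<rho> b)"
    by (auto simp: upLs_def fun_eq_iff)
  ultimately show ?case using Case.hyps freshM_liftL(2)[OF Case.prems(3)] by simp
qed auto

text \<open>A \<mu>-abstraction under Phi absorbs the stack it is applied to: each reduction step
  (\<mu>a.s e) \<triangleright> \<mu>a.s[a:=* e] appends e to the stack of the bound \<mu>-variable.\<close>
lemma Mu_Phi_absorbs_stack:
  "reds (apps (Mu (Phi (upM \<sigma>) ((upMs \<rho>)(0 := map (liftMe 0) q)) (upMr r) s)) p)
        (Mu (Phi (upM \<sigma>) ((upMs \<rho>)(0 := map (liftMe 0) (q @ p))) (upMr r) s))"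
proof (induct p arbitrary: q)
  case Nil
  then show ?case by simp
next
  case (Cons e p)
  let ?\<rho> = "\<lambda>q. (upMs \<rho>)(0 := map (liftMe 0) q)"
  have fresh: "\<forall>x. freshM 0 (upM \<sigma> x)" "\<forall>b. \<forall>g\<in>set (?\<rho> q b). freshMe 0 g"
    by (auto simp: upM_def upMs_def freshM_liftM_same split: nat.split)
  have "(\<lambda>b. if upMr r b = 0 then ?\<rho> q b @ [liftMe 0 e] else ?\<rho> q b) = ?\<rho> (q @ [e])"
    by (auto simp: upMr_def fun_eq_iff split: nat.split)
  then have "red (App (Mu (Phi (upM \<sigma>) (?\<rho> q) (upMr r) s)) e)
      (Mu (Phi (upM \<sigma>) (?\<rho> (q @ [e])) (upMr r) s))"
    using r_mu[of "Phi (upM \<sigma>) (?\<rho> q) (upMr r) s" e]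
    by (simp add: Phi_substM(1)[OF fresh freshM_liftM_same(2)])
  then have "red (apps (Mu (Phi (upM \<sigma>) (?\<rho> q) (upMr r) s)) (e # p))
      (apps (Mu (Phi (upM \<sigma>) (?\<rho> (q @ [e])) (upMr r) s)) p)"
    unfolding apps_Cons by (rule red_apps)
  moreover have "reds (apps (Mu (Phi (upM \<sigma>) (?\<rho> (q @ [e])) (upMr r) s)) p)
      (Mu (Phi (upM \<sigma>) (?\<rho> (q @ e # p)) (upMr r) s))"
    using Cons.hyps[of "q @ [e]"] unfolding append_assoc append.simps .
  ultimately show ?case by (rule converse_rtranclp_into_rtranclp)
qed


text \<open>Shifting all free \<mu>-variables by n; under n \<mu>-binders the target t of M_t becomes
  liftsM n t.\<close>
definition liftsM :: "nat \<Rightarrow> trm \<Rightarrow> trm" where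
  "liftsM n = liftM 0 ^^ n"

definition liftsMe :: "nat \<Rightarrow> etrm \<Rightarrow> etrm" where
  "liftsMe n = liftMe 0 ^^ n"

lemma liftsM_0 [simp]: "liftsM 0 = (\<lambda>x. x)" and liftsMe_0 [simp]: "liftsMe 0 = (\<lambda>x. x)"
  by (simp_all add: liftsM_def liftsMe_def id_def)

lemma liftsM_Suc: "liftsM (Suc n) x = liftM 0 (liftsM n x)"
  and liftsMe_Suc: "liftsMe (Suc n) e = liftMe 0 (liftsMe n e)"
  by (simp_all add: liftsM_def liftsMe_def)

lemma liftsM_add: "liftsM n (liftsM m x) = liftsM (n + m) x"
  and liftsMe_add: "liftsMe n (liftsMe m e) = liftsMe (n + m) e"
  by (simp_all add: liftsM_def liftsMe_def funpow_add)

lemma liftsMe_simps [simp]: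
  "liftsMe n (ET u) = ET (liftsM n u)"
  "liftsMe n Pi1 = Pi1"
  "liftsMe n Pi2 = Pi2"
  "liftsMe n (Case u v) = Case (liftsM n u) (liftsM n v)"
  by (induct n) (auto simp: liftsM_Suc liftsMe_Suc)

lemma liftsM_Phi:
  "liftsM n (Phi \<sigma> \<rho> r s) = Phi (\<lambda>x. liftsM n (\<sigma> x)) (\<lambda>b. map (liftsMe n) (\<rho> b)) (\<lambda>b. r b + n) s"
  by (induct n) (simp_all add: liftsM_Suc Phi_liftM(1) liftsMe_Suc o_def)

lemma liftsM_upL:
  "(\<lambda>x. liftsM n (upL \<sigma> x)) = upL (\<lambda>x. liftsM n (\<sigma> x))"
  "(\<lambda>b. map (liftsMe n) (upLs \<rho> b)) = upLs (\<lambda>b. map (liftsMe n) (\<rho> b))"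
proof -
  have "liftsM n (liftL 0 u) = liftL 0 (liftsM n u)" for u
    by (induct n) (auto simp: liftsM_Suc liftM_liftL)
  moreover have "liftsMe n (liftLe 0 e) = liftLe 0 (liftsMe n e)" for e
    by (induct n) (auto simp: liftsMe_Suc liftM_liftL)
  moreover have "liftsM n (Var i) = Var i" for i
    by (induct n) (auto simp: liftsM_Suc)
  ultimately show "(\<lambda>x. liftsM n (upL \<sigma> x)) = upL (\<lambda>x. liftsM n (\<sigma> x))"
      "(\<lambda>b. map (liftsMe n) (upLs \<rho> b)) = upLs (\<lambda>b. map (liftsMe n) (\<rho> b))"
    by (auto simp: upL_def upLs_def fun_eq_iff split: nat.split)
qed


section \<open>Realizability\<close>

definition Pole :: "trm \<Rightarrow> trm set" where
  "Pole t = {s. \<exists>w. reds s w \<and> inM t w}"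

lemma Pole_base: "t \<in> Pole t"
  unfolding Pole_def by (blast intro: M_base)

lemma Pole_reds: "reds x y \<Longrightarrow> y \<in> Pole t \<Longrightarrow> x \<in> Pole t"
  unfolding Pole_def by (auto intro: rtranclp_trans)

lemma Pole_head_red: "red x y \<Longrightarrow> apps y p \<in> Pole t \<Longrightarrow> apps x p \<in> Pole t"
  using Pole_reds red_apps r_into_rtranclp by metis

definition RealOf :: "(trm \<Rightarrow> etrm list set) \<Rightarrow> trm \<Rightarrow> trm \<Rightarrow> bool" where
  "RealOf S t s = (\<forall>n p. p \<in> S (liftsM n t) \<longrightarrow> apps (liftsM n s) p \<in> Pole (liftsM n t))"

primrec Stk :: "form \<Rightarrow> trm \<Rightarrow> etrm list set" where
  "Stk (PVar q) = (\<lambda>t. UNIV)"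
| "Stk Bot = (\<lambda>t. {[]})"
| "Stk (Imp A B) = (\<lambda>t. {ET u # p | u p. RealOf (Stk A) t u \<and> p \<in> Stk B t})"
| "Stk (Conj A B) = (\<lambda>t. {Pi1 # p | p. p \<in> Stk A t} \<union> {Pi2 # p | p. p \<in> Stk B t})"
| "Stk (Disj A B) = (\<lambda>t. {Case u v # p | u v p.
     (\<forall>n a. RealOf (Stk A) (liftsM n t) a
        \<longrightarrow> apps (substL (liftsM n u) 0 a) (map (liftsMe n) p) \<in> Pole (liftsM n t)) \<and>
     (\<forall>n a. RealOf (Stk B) (liftsM n t) a
        \<longrightarrow> apps (substL (liftsM n v) 0 a) (map (liftsMe n) p) \<in> Pole (liftsM n t))})"

abbreviation Real :: "form \<Rightarrow> trm \<Rightarrow> trm \<Rightarrow> bool" where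
  "Real A \<equiv> RealOf (Stk A)"

lemma Real_use: "Real A t s \<Longrightarrow> p \<in> Stk A t \<Longrightarrow> apps s p \<in> Pole t"
  unfolding RealOf_def by (metis liftsM_0)

lemma Real_liftsM: "Real A t s \<Longrightarrow> Real A (liftsM m t) (liftsM m s)"
  unfolding RealOf_def by (metis liftsM_add)

lemma Stk_liftsM: "p \<in> Stk A t \<Longrightarrow> map (liftsMe m) p \<in> Stk A (liftsM m t)"
proof (induct A arbitrary: t p)
  case (Imp A B)
  then show ?case by (auto simp: Real_liftsM)
next
  case (Disj A B)
  then obtain u v q where p: "p = Case u v # q" and
    "\<forall>n a. Real A (liftsM n t) a
       \<longrightarrow> apps (substL (liftsM n u) 0 a) (map (liftsMe n) q) \<in> Pole (liftsM n t)" and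
    "\<forall>n a. Real B (liftsM n t) a
       \<longrightarrow> apps (substL (liftsM n v) 0 a) (map (liftsMe n) q) \<in> Pole (liftsM n t)"
    by auto
  moreover have "liftsMe n \<circ> liftsMe m = liftsMe (n + m)" for n
    by (simp add: liftsMe_add fun_eq_iff)
  ultimately show ?case unfolding p by (simp add: liftsM_add)
qed auto

lemma Stk_Disj_branches:
  assumes "Case u v # q \<in> Stk (Disj A B) t"
  shows "Real A t a \<Longrightarrow> apps (substL u 0 a) q \<in> Pole t"
    and "Real B t a \<Longrightarrow> apps (substL v 0 a) q \<in> Pole t"
  using assms by (auto dest!: spec[of _ 0])

definition valid :: "trm \<Rightarrow> (nat \<Rightarrow> form option) \<Rightarrow> (nat \<Rightarrow> form option)
    \<Rightarrow> (nat \<Rightarrow> trm) \<Rightarrow> (nat \<Rightarrow> etrm list) \<Rightarrow> bool" where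
  "valid t G D \<sigma> \<rho> \<longleftrightarrow>
     (\<forall>x B. G x = Some B \<longrightarrow> Real B t (\<sigma> x)) \<and> (\<forall>b B. D b = Some B \<longrightarrow> \<rho> b \<in> Stk B t)"

lemma valid_liftsM:
  "valid t G D \<sigma> \<rho> \<Longrightarrow> valid (liftsM n t) G D (\<lambda>x. liftsM n (\<sigma> x)) (\<lambda>b. map (liftsMe n) (\<rho> b))"
  unfolding valid_def by (auto simp: Real_liftsM Stk_liftsM)

lemma valid_cons0: "valid t G D \<sigma> \<rho> \<Longrightarrow> Real A t a \<Longrightarrow> valid t (ext A G) D (cons0 a \<sigma>) \<rho>"
  unfolding valid_def by (auto simp: ext_def cons0_def split: nat.split)

text \<open>Entering a \<mu>-binder of type A whose body will absorb the stack p of A.\<close>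
lemma valid_Mu:
  assumes "valid t G D \<sigma> \<rho>" and "p \<in> Stk A t"
  shows "valid (liftM 0 t) G (ext A D) (upM \<sigma>) ((upMs \<rho>)(0 := map (liftMe 0) p))"
proof -
  have "liftsM (Suc 0) = liftM 0" "liftsMe (Suc 0) = liftMe 0"
    by (simp_all add: liftsM_def liftsMe_def)
  then show ?thesis
    using assms Real_liftsM[of _ t _ "Suc 0"] Stk_liftsM[of _ _ t "Suc 0"]
    unfolding valid_def by (auto simp: ext_def upM_def upMs_def split: nat.split)
qed


section \<open>Adequacy\<close>

definition sound :: "(nat \<Rightarrow> form option) \<Rightarrow> trm \<Rightarrow> form \<Rightarrow> (nat \<Rightarrow> form option) \<Rightarrow> bool" where
  "sound G s A D \<longleftrightarrow>
     (\<forall>t \<sigma> \<rho> r p. valid t G D \<sigma> \<rho> \<longrightarrow> p \<in> Stk A t \<longrightarrow> apps (Phi \<sigma> \<rho> r s) p \<in> Pole t)"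

lemma soundI:
  "(\<And>t \<sigma> \<rho> r p. valid t G D \<sigma> \<rho> \<Longrightarrow> p \<in> Stk A t \<Longrightarrow> apps (Phi \<sigma> \<rho> r s) p \<in> Pole t)
    \<Longrightarrow> sound G s A D"
  unfolding sound_def by blast

lemma soundD:
  "sound G s A D \<Longrightarrow> valid t G D \<sigma> \<rho> \<Longrightarrow> p \<in> Stk A t \<Longrightarrow> apps (Phi \<sigma> \<rho> r s) p \<in> Pole t"
  unfolding sound_def by blast

text \<open>Instances of soundly typed terms are realizers; shift-invariance of valid environments
  provides the uniformity over shifts required by RealOf.\<close>
lemma sound_Real: "sound G s A D \<Longrightarrow> valid t G D \<sigma> \<rho> \<Longrightarrow> Real A t (Phi \<sigma> \<rho> r s)"
  unfolding RealOf_def liftsM_Phi by (blast intro: soundD valid_liftsM)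

lemma sound_var: "G x = Some A \<Longrightarrow> sound G (Var x) A D"
  by (rule soundI) (auto simp: valid_def intro: Real_use)

lemma sound_lam:
  assumes "sound (ext A G) s B D"
  shows "sound G (Lam s) (Imp A B) D"
proof (rule soundI)
  fix t \<sigma> \<rho> r p
  assume v: "valid t G D \<sigma> \<rho>" and "p \<in> Stk (Imp A B) t"
  then obtain a q where p: "p = ET a # q" and "Real A t a" and "q \<in> Stk B t" by auto
  with assms v have "apps (Phi (cons0 a \<sigma>) \<rho> r s) q \<in> Pole t"
    by (blast intro: soundD valid_cons0)
  then show "apps (Phi \<sigma> \<rho> r (Lam s)) p \<in> Pole t"
    unfolding p by (auto intro: Pole_head_red[OF r_beta] simp: substL_Phi_upL)
qed

lemma sound_app:
  assumes hu: "sound G u (Imp A B) D" and hv: "sound G v A D"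
  shows "sound G (App u (ET v)) B D"
proof (rule soundI)
  fix t \<sigma> \<rho> r p
  assume v: "valid t G D \<sigma> \<rho>" and "p \<in> Stk B t"
  with sound_Real[OF hv v] have "ET (Phi \<sigma> \<rho> r v) # p \<in> Stk (Imp A B) t"
    by simp
  from soundD[OF hu v this] show "apps (Phi \<sigma> \<rho> r (App u (ET v))) p \<in> Pole t"
    by simp
qed

lemma sound_pair:
  assumes hu: "sound G u A D" and hv: "sound G v B D"
  shows "sound G (trm.Pair u v) (Conj A B) D"
proof (rule soundI)
  fix t \<sigma> \<rho> r p
  assume v: "valid t G D \<sigma> \<rho>" and "p \<in> Stk (Conj A B) t"
  then consider q where "p = Pi1 # q" "q \<in> Stk A t" | q where "p = Pi2 # q" "q \<in> Stk B t"
    by auto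
  then show "apps (Phi \<sigma> \<rho> r (trm.Pair u v)) p \<in> Pole t"
  proof cases
    case 1
    then show ?thesis using soundD[OF hu v] by (simp add: Pole_head_red[OF r_pi1])
  next
    case 2
    then show ?thesis using soundD[OF hv v] by (simp add: Pole_head_red[OF r_pi2])
  qed
qed

lemma sound_pi1:
  assumes "sound G s (Conj A B) D"
  shows "sound G (App s Pi1) A D"
proof (rule soundI)
  fix t \<sigma> \<rho> r p
  assume "valid t G D \<sigma> \<rho>" and "p \<in> Stk A t"
  then have "apps (Phi \<sigma> \<rho> r s) (Pi1 # p) \<in> Pole t"
    by (intro soundD[OF assms]) auto
  then show "apps (Phi \<sigma> \<rho> r (App s Pi1)) p \<in> Pole t"
    by simp
qed

lemma sound_pi2:
  assumes "sound G s (Conj A B) D"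
  shows "sound G (App s Pi2) B D"
proof (rule soundI)
  fix t \<sigma> \<rho> r p
  assume "valid t G D \<sigma> \<rho>" and "p \<in> Stk B t"
  then have "apps (Phi \<sigma> \<rho> r s) (Pi2 # p) \<in> Pole t"
    by (intro soundD[OF assms]) auto
  then show "apps (Phi \<sigma> \<rho> r (App s Pi2)) p \<in> Pole t"
    by simp
qed

lemma sound_inl:
  assumes "sound G s A D"
  shows "sound G (trm.Inl s) (Disj A B) D"
proof (rule soundI)
  fix t \<sigma> \<rho> r p
  assume v: "valid t G D \<sigma> \<rho>" and "p \<in> Stk (Disj A B) t"
  then obtain u w q where p: "p = Case u w # q" and stk: "Case u w # q \<in> Stk (Disj A B) t"
    by auto
  have "apps (substL u 0 (Phi \<sigma> \<rho> r s)) q \<in> Pole t"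
    by (rule Stk_Disj_branches(1)[OF stk sound_Real[OF assms v]])
  then show "apps (Phi \<sigma> \<rho> r (trm.Inl s)) p \<in> Pole t"
    unfolding p by (simp add: Pole_head_red[OF r_inl])
qed

lemma sound_inr:
  assumes "sound G s B D"
  shows "sound G (trm.Inr s) (Disj A B) D"
proof (rule soundI)
  fix t \<sigma> \<rho> r p
  assume v: "valid t G D \<sigma> \<rho>" and "p \<in> Stk (Disj A B) t"
  then obtain u w q where p: "p = Case u w # q" and stk: "Case u w # q \<in> Stk (Disj A B) t"
    by auto
  have "apps (substL w 0 (Phi \<sigma> \<rho> r s)) q \<in> Pole t"
    by (rule Stk_Disj_branches(2)[OF stk sound_Real[OF assms v]])
  then show "apps (Phi \<sigma> \<rho> r (trm.Inr s)) p \<in> Pole t"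
    unfolding p by (simp add: Pole_head_red[OF r_inr])
qed

lemma sound_case:
  assumes hs: "sound G s (Disj A B) D"
    and hu: "sound (ext A G) u C D" and hv: "sound (ext B G) v C D"
  shows "sound G (App s (Case u v)) C D"
proof (rule soundI)
  fix t \<sigma> \<rho> r p
  assume v: "valid t G D \<sigma> \<rho>" and p: "p \<in> Stk C t"
  text \<open>Each branch, shifted and instantiated by a realizer, is again an instance of Phi.\<close>
  have branch: "apps (substL (liftsM n (Phi (upL \<sigma>) (upLs \<rho>) r w)) 0 a) (map (liftsMe n) p)
      \<in> Pole (liftsM n t)"
    if "sound (ext E G) w C D" and "Real E (liftsM n t) a" for w E n a
  proof -
    have "valid (liftsM n t) (ext E G) D
        (cons0 a (\<lambda>x. liftsM n (\<sigma> x))) (\<lambda>b. map (liftsMe n) (\<rho> b))"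
      using valid_cons0[OF valid_liftsM[OF v] that(2)] .
    from soundD[OF that(1) this Stk_liftsM[OF p]] show ?thesis
      by (simp add: liftsM_Phi liftsM_upL substL_Phi_upL)
  qed
  have "Case (Phi (upL \<sigma>) (upLs \<rho>) r u) (Phi (upL \<sigma>) (upLs \<rho>) r v) # p \<in> Stk (Disj A B) t"
    using branch[OF hu] branch[OF hv] by auto
  from soundD[OF hs v this] show "apps (Phi \<sigma> \<rho> r (App s (Case u v))) p \<in> Pole t"
    by simp
qed

lemma sound_mapp:
  assumes "D a = Some A" and "sound G s A D"
  shows "sound G (MApp a s) Bot D"
proof (rule soundI)
  fix t \<sigma> \<rho> r p
  assume v: "valid t G D \<sigma> \<rho>" and "p \<in> Stk Bot t"
  then have p: "p = []" by simp
  have "\<rho> a \<in> Stk A t" using v assms(1) unfolding valid_def by blast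
  from soundD[OF assms(2) v this] obtain w
    where "reds (apps (Phi \<sigma> \<rho> r s) (\<rho> a)) w" and "inM t w"
    unfolding Pole_def by blast
  then show "apps (Phi \<sigma> \<rho> r (MApp a s)) p \<in> Pole t"
    unfolding p Pole_def by (auto intro: reds_MApp M_app)
qed

lemma sound_mu:
  assumes "sound G s Bot (ext A D)"
  shows "sound G (Mu s) A D"
proof (rule soundI)
  fix t \<sigma> \<rho> r p
  assume v: "valid t G D \<sigma> \<rho>" and p: "p \<in> Stk A t"
  let ?body = "\<lambda>q. Phi (upM \<sigma>) ((upMs \<rho>)(0 := map (liftMe 0) q)) (upMr r) s"
  have "apps (?body p) [] \<in> Pole (liftM 0 t)"
    using soundD[OF assms valid_Mu[OF v p]] by simp
  then have "Mu (?body p) \<in> Pole t"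
    unfolding Pole_def by (auto intro: reds_Mu M_mu)
  moreover have "upMs \<rho> = (upMs \<rho>)(0 := map (liftMe 0) [])"
    by (auto simp: upMs_def fun_eq_iff split: nat.split)
  ultimately show "apps (Phi \<sigma> \<rho> r (Mu s)) p \<in> Pole t"
    using Mu_Phi_absorbs_stack[of \<sigma> \<rho> "[]" r s p] by (auto intro: Pole_reds)
qed

theorem adequacy: "typing G s A D \<Longrightarrow> sound G s A D"
  by (induct rule: typing.induct)
     (erule sound_var sound_lam sound_app sound_pair sound_pi1 sound_pi2
       sound_inl sound_inr sound_case sound_mapp sound_mu; assumption)+


theorem mainTheorem6:
  fixes P :: nat and T :: trm
  assumes "typing (\<lambda>_. None) T (Imp Bot (PVar P)) (\<lambda>_. None)"
  shows "\<forall>t us. \<exists>w. reds (apps (App T (ET t)) us) w \<and> inM t w"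
proof (intro allI)
  fix t us
  have "valid t (\<lambda>_. None) (\<lambda>_. None) Var (\<lambda>_. [])"
    by (simp add: valid_def)
  moreover have "Real Bot t t"
    unfolding RealOf_def using Pole_base by simp
  then have "ET t # us \<in> Stk (Imp Bot (PVar P)) t"
    by simp
  ultimately have "apps (Phi Var (\<lambda>_. []) id T) (ET t # us) \<in> Pole t"
    by (rule soundD[OF adequacy[OF assms]])
  then show "\<exists>w. reds (apps (App T (ET t)) us) w \<and> inM t w"
    by (simp add: Phi_id Pole_def)
qed

end
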